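(* Let $Y(0),Y(1)$ be integrable real potential outcomes and $X$ a random vector in $\mathbb{R}^{d_X}$ with support $\mathcal{X}=\mathcal{X}_0\cup\mathcal{X}_1$, $\mathcal{X}_0\cap\mathcal{X}_1=\emptyset$, with $D=1\{X\in\mathcal{X}_1\}$ and $Y=DY(1)+(1-D)Y(0)$. Write $X=(X^{(1)},X^{(2)})$ for a fixed split of the coordinates and correspondingly $x=(x^{(1)},x^{(2)})$. Suppose $x\mapsto E[Y(d)|X=x]$ is continuous on $\mathcal{X}$ for $d=0,1$, and conditional local comonotonicity holds: for every $x_1\in\mathcal{X}$ there is a neighborhood $N$ of $x_1$ such that for all $x_2\in N\cap\mathcal{X}$ with $x_2^{(2)}=x_1^{(2)}$, $$E[Y(1)|X=x_1]\geq E[Y(1)|X=x_2]\iff E[Y(0)|X=x_1]\geq E[Y(0)|X=x_2].$$ Let $\mathcal{F}=\mathrm{cl}(\mathrm{int}(\mathcal{X}_1))\cap\mathrm{cl}(\mathrm{int}(\mathcal{X}_0))$ and for $d\in\{0,1\}$ let $g_d$ be a function on $\mathcal{X}_d\cup\mathcal{F}$ with $g_d(x)=E[Y|X=x]$ for $x\in\mathcal{X}_d$ and continuous at each point of $\mathcal{F}$. Suppose that for some $d$ and some $x\in\mathcal{X}_d$ there is a continuous path $p:[0,1]\to\mathcal{X}_d\cup\mathcal{F}$ with $p(0)=x$, $p(1)=x^*\in\mathcal{F}$, $p(t)^{(2)}=x^{(2)}$ for all $t\in[0,1]$, and $E[Y|X=p(t)]=E[Y|X=x]$ for all $t\in(0,1)$.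 Then $E[Y(1)|X=x]=g_1(x^* )$ and $E[Y(0)|X=x]=g_0(x^* )$.
   Context: Conditional expectation functions are understood as the unique continuous versions; for $z\in\mathcal{X}$, $E[Y|X=z]$ equals $E[Y(d)|X=z]$ when $z\in\mathcal{X}_d$. *)

theory Defs
  imports "HOL-Probability.Probability"
begin

definition rv_support :: "'w measure \<Rightarrow> ('w \<Rightarrow> 'a::metric_space) \<Rightarrow> 'a set" where
  "rv_support M X = {z. \<forall>e>0. measure M {w \<in> space M. X w \<in> ball z e} > 0}"

text \<open>m is a version of the conditional expectation function z \<mapsto> E[Yd | X = z].\<close>
definition is_cef :: "'w measure \<Rightarrow> ('w \<Rightarrow> 'a::topological_space) \<Rightarrow> ('w \<Rightarrow> real) \<Rightarrow> ('a \<Rightarrow> real) \<Rightarrow> bool" where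
  "is_cef M X Yd m \<longleftrightarrow> m \<in> borel_measurable borel \<and> integrable M (\<lambda>w. m (X w)) \<and>
     (\<forall>B\<in>sets borel. (\<integral>w. indicator (X -` B \<inter> space M) w * Yd w \<partial>M)
                    = (\<integral>w. indicator (X -` B \<inter> space M) w * m (X w) \<partial>M))"

text \<open>Observed-outcome CEF E[Y|X=z]: equals E[Y(1)|X=z] on X1 and E[Y(0)|X=z] otherwise
  (on the support X = X0 \<union> X1 this is E[Y(0)|X=z] exactly for z \<in> X0).\<close>
definition obs_cef :: "'a set \<Rightarrow> ('a \<Rightarrow> real) \<Rightarrow> ('a \<Rightarrow> real) \<Rightarrow> 'a \<Rightarrow> real" where
  "obs_cef X1 m0 m1 z = (if z \<in> X1 then m1 z else m0 z)"

end

theory Submission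
  imports Defs
begin

(* Composed with the path p, both conditional mean functions are continuous in t, and since p keeps
   the coordinates x^(2) fixed, conditional local comonotonicity makes them locally comonotone in t.
   On (0,1) the observed mean stays at its initial value c, so at every time one of the two composites
   equals c. If the composite starting at c took another value at some time t, then between the last
   time before t at which it equals c and t the other composite would be pinned to c, so comonotonicity
   would make every point there a local maximum of the first one; but a continuous function with a
   local maximum at every interior point of an interval is constant, a contradiction. So that composite
   is constant, and by the same local-maximum argument so is the other one, i.e.
   E[Y(d)|X = x] = E[Y(d)|X = xstar] for d = 0, 1. Finally xstar lies in the closure of int X_d, where
   g_d coincides with E[Y(d)|X = .], which is continuous at xstar because the support is closed;
   hence g_d(xstar) = E[Y(d)|X = xstar]. *)

lemma local_max_everywhere_imp_le:
  fixes g :: "real \<Rightarrow> real"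
  assumes "a \<le> b" and cont: "continuous_on {a..b} g"
    and max: "\<And>t. t \<in> {a<..<b} \<Longrightarrow> eventually (\<lambda>s. g s \<le> g t) (at t)"
  shows "g b \<le> g a"
proof (rule ccontr)
  assume "\<not> g b \<le> g a"
  define v where "v = (g a + g b) / 2"
  have v: "g a < v" "v < g b"
    using \<open>\<not> g b \<le> g a\<close> unfolding v_def by auto
  obtain c where c: "c \<in> {a..b}" "g c = v"
    using IVT'[of g a v b] v \<open>a \<le> b\<close> cont by force
  define W where "W = {a..b} \<inter> g -` {..v}"
  define T where "T = Sup W"
  have "closed W"
    unfolding W_def using continuous_closed_preimage[OF cont] by auto
  have "bdd_above W"
    unfolding W_def by (rule bdd_aboveI[of _ b]) auto
  have "c \<in> W"
    using c unfolding W_def by auto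
  have "T \<in> W" "c \<le> T"
    unfolding T_def using closed_contains_Sup cSup_upper \<open>closed W\<close> \<open>bdd_above W\<close> \<open>c \<in> W\<close>
    by blast+
  have "c \<noteq> a" "T \<noteq> b"
    using c v \<open>T \<in> W\<close> unfolding W_def by auto
  then have T: "T \<in> {a<..<b}"
    using c \<open>c \<le> T\<close> \<open>T \<in> W\<close> unfolding W_def by auto
  (* T is the last time g is at most v, so g T is not a local maximum from the right *)
  have above: "g T < g s" if "T < s" "s < b" for s
  proof -
    have "s \<notin> W"
      using cSup_upper[OF _ \<open>bdd_above W\<close>] \<open>T < s\<close> unfolding T_def by fastforce
    then show ?thesis
      using that T \<open>T \<in> W\<close> unfolding W_def by auto
  qed
  have "eventually (\<lambda>s. g s \<le> g T) (at_right T)"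
    using max[OF T] by (simp add: eventually_at_split)
  moreover have "eventually (\<lambda>s. T < s \<and> s < b) (at_right T)"
    by (rule eventually_at_rightI[of T b]) (use T in auto)
  ultimately have "eventually (\<lambda>_. False) (at_right T)"
    by eventually_elim (use above in force)
  then show False
    by simp
qed

lemma local_max_everywhere_imp_eq:
  fixes g :: "real \<Rightarrow> real"
  assumes "a \<le> b" and cont: "continuous_on {a..b} g"
    and max: "\<And>t. t \<in> {a<..<b} \<Longrightarrow> eventually (\<lambda>s. g s \<le> g t) (at t)"
  shows "g a = g b"
proof (rule antisym)
  show "g b \<le> g a"
    using local_max_everywhere_imp_le assms by blast
  define r where "r t = a + b - t" for t :: real
  have "g (r b) \<le> g (r a)"
  proof (rule local_max_everywhere_imp_le[where g = "\<lambda>t. g (r t)", OF \<open>a \<le> b\<close>])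
    show "continuous_on {a..b} (\<lambda>t. g (r t))"
      unfolding r_def
      by (intro continuous_on_compose2[OF cont] continuous_intros) auto
    fix t assume "t \<in> {a<..<b}"
    then have "eventually (\<lambda>s. g s \<le> g (r t)) (at (r t))"
      by (intro max) (auto simp: r_def)
    then show "eventually (\<lambda>s. g (r s) \<le> g (r t)) (at t)"
      unfolding eventually_at dist_real_def r_def
      by (auto simp: abs_minus_commute)
  qed
  then show "g a \<le> g b"
    by (simp add: r_def)
qed

lemma comonotone_with_const_imp_eq:
  fixes f h :: "real \<Rightarrow> real"
  assumes "a \<le> b" and cont: "continuous_on {a..b} f"
    and comono: "\<And>t. t \<in> {a<..<b} \<Longrightarrow> eventually (\<lambda>s. (f s \<le> f t) = (h s \<le> h t)) (at t)"
    and const: "\<And>t. t \<in> {a<..<b} \<Longrightarrow> h t = c"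
  shows "f a = f b"
proof (rule local_max_everywhere_imp_eq[OF \<open>a \<le> b\<close> cont])
  fix t assume t: "t \<in> {a<..<b}"
  have "eventually (\<lambda>s. s \<in> {a<..<b}) (at t)"
    using t by (intro eventually_at_in_open') auto
  with comono[OF t] show "eventually (\<lambda>s. f s \<le> f t) (at t)"
    by eventually_elim (simp add: const const[OF t])
qed

lemma comonotone_level_imp_level:
  fixes f h :: "real \<Rightarrow> real"
  assumes cont: "continuous_on {a..b} f"
    and comono: "\<And>t. t \<in> {a<..<b} \<Longrightarrow> eventually (\<lambda>s. (f s \<le> f t) = (h s \<le> h t)) (at t)"
    and level: "\<And>t. t \<in> {a<..<b} \<Longrightarrow> f t = f a \<or> h t = f a"
    and t: "t \<in> {a..b}"
  shows "f t = f a"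
proof (rule ccontr)
  assume "f t \<noteq> f a"
  define U where "U = {a..t} \<inter> f -` {f a}"
  define u where "u = Sup U"
  have "closed U"
    unfolding U_def using continuous_closed_preimage[OF continuous_on_subset[OF cont]] t by auto
  moreover have "bdd_above U" "a \<in> U"
    unfolding U_def using t by auto
  ultimately have "u \<in> U"
    unfolding u_def using closed_contains_Sup by blast
  then have u: "a \<le> u" "u < t" "f u = f a"
    using \<open>f t \<noteq> f a\<close> unfolding U_def by (auto simp: le_less)
  have "f u = f t"
  proof (rule comonotone_with_const_imp_eq[of u t f h "f a"])
    show "continuous_on {u..t} f"
      by (rule continuous_on_subset[OF cont]) (use u t in auto)
    show "eventually (\<lambda>r. (f r \<le> f s) = (h r \<le> h s)) (at s)" if "s \<in> {u<..<t}" for s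
      by (rule comono) (use that u t in auto)
    show "h s = f a" if "s \<in> {u<..<t}" for s
    proof -
      have "s \<notin> U"
        using cSup_upper[OF _ \<open>bdd_above U\<close>] that unfolding u_def by fastforce
      then show ?thesis
        using level[of s] that u t unfolding U_def by auto
    qed
  qed (use u in simp)
  with u \<open>f t \<noteq> f a\<close> show False
    by simp
qed

lemma comonotone_level_imp_const:
  fixes f h :: "real \<Rightarrow> real"
  assumes "a \<le> b" and cont_f: "continuous_on {a..b} f" and cont_h: "continuous_on {a..b} h"
    and comono: "\<And>t. t \<in> {a..b} \<Longrightarrow>
                   eventually (\<lambda>s. (f s \<le> f t) = (h s \<le> h t)) (at t within {a..b})"
    and level: "\<And>t. t \<in> {a<..<b} \<Longrightarrow> f t = c \<or> h t = c"
    and init: "c = f a \<or> c = h a"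
  shows "f b = f a \<and> h b = h a"
proof -
  have comono_fh: "eventually (\<lambda>s. (f s \<le> f t) = (h s \<le> h t)) (at t)"
    if "t \<in> {a<..<b}" for t
    using comono[of t] that at_within_interior[of t "{a..b}"] by simp
  have comono_hf: "eventually (\<lambda>s. (h s \<le> h t) = (f s \<le> f t)) (at t)"
    if "t \<in> {a<..<b}" for t
    using comono_fh[OF that] by (rule eventually_mono) (rule sym)
  from init show ?thesis
  proof
    assume "c = f a"
    have f_const: "f t = f a" if "t \<in> {a..b}" for t
      by (rule comonotone_level_imp_level[OF cont_f comono_fh]) (use level \<open>c = f a\<close> that in auto)
    have "h a = h b"
      by (rule comonotone_with_const_imp_eq[OF \<open>a \<le> b\<close> cont_h comono_hf, where c = "f a"])
        (auto intro: f_const)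
    with f_const[of b] \<open>a \<le> b\<close> show ?thesis
      by simp
  next
    assume "c = h a"
    have h_const: "h t = h a" if "t \<in> {a..b}" for t
      by (rule comonotone_level_imp_level[OF cont_h comono_hf]) (use level \<open>c = h a\<close> that in auto)
    have "f a = f b"
      by (rule comonotone_with_const_imp_eq[OF \<open>a \<le> b\<close> cont_f comono_fh, where c = "h a"])
        (auto intro: h_const)
    with h_const[of b] \<open>a \<le> b\<close> show ?thesis
      by simp
  qed
qed

lemma comonotone_along_path:
  fixes p :: "real \<Rightarrow> 'a::topological_space ^ 'n" and m0 m1 :: "'a ^ 'n \<Rightarrow> 'b::order"
  assumes comono: "\<forall>x1\<in>Xs. \<exists>N. open N \<and> x1 \<in> N \<and>
                   (\<forall>x2\<in>N \<inter> Xs. (\<forall>i\<in>S. x2 $ i = x1 $ i) \<longrightarrow>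
                      (m1 x1 \<ge> m1 x2 \<longleftrightarrow> m0 x1 \<ge> m0 x2))"
    and cont: "continuous_on T p" and path_in: "p ` T \<subseteq> Xs"
    and fixed: "\<forall>s\<in>T. \<forall>i\<in>S. p s $ i = c $ i" and "t \<in> T"
  shows "eventually (\<lambda>s. (m1 (p s) \<le> m1 (p t)) = (m0 (p s) \<le> m0 (p t))) (at t within T)"
proof -
  have "p t \<in> Xs"
    using path_in \<open>t \<in> T\<close> by auto
  with comono obtain N where "open N" "p t \<in> N"
    and comono_N: "\<forall>x2\<in>N \<inter> Xs. (\<forall>i\<in>S. x2 $ i = p t $ i) \<longrightarrow>
                     (m1 (p t) \<ge> m1 x2 \<longleftrightarrow> m0 (p t) \<ge> m0 x2)"
    by blast
  have "(p \<longlongrightarrow> p t) (at t within T)"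
    using cont \<open>t \<in> T\<close> by (simp add: continuous_on_def)
  then have "eventually (\<lambda>s. p s \<in> N) (at t within T)"
    using \<open>open N\<close> \<open>p t \<in> N\<close> by (rule topological_tendstoD)
  moreover have "eventually (\<lambda>s. s \<in> T) (at t within T)"
    by (simp add: eventually_at_filter)
  ultimately show ?thesis
    by eventually_elim (use comono_N fixed path_in \<open>t \<in> T\<close> in auto)
qed

lemma continuous_within_closure_eq:
  fixes f g :: "'a::t2_space \<Rightarrow> 'b::t2_space"
  assumes "z \<in> closure A" "continuous (at z within B) f" "continuous (at z within C) g"
    and "A \<subseteq> B" "A \<subseteq> C" and eq: "\<And>y. y \<in> A \<Longrightarrow> f y = g y"
  shows "f z = g z"
proof (cases "z islimpt A")
  case True
  then have nontrivial: "at z within A \<noteq> bot"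
    by (simp add: trivial_limit_within)
  have "eventually (\<lambda>y. f y = g y) (at z within A)"
    by (simp add: eventually_at_filter eq)
  moreover have "(f \<longlongrightarrow> f z) (at z within A)"
    using continuous_within_subset[OF assms(2,4)] unfolding continuous_within .
  ultimately have "(g \<longlongrightarrow> f z) (at z within A)"
    by (simp add: tendsto_cong)
  moreover have "(g \<longlongrightarrow> g z) (at z within A)"
    using continuous_within_subset[OF assms(3,5)] unfolding continuous_within .
  ultimately show ?thesis
    using tendsto_unique[OF nontrivial] by blast
next
  case False
  then show ?thesis
    using assms(1) eq unfolding closure_def by auto
qed

lemma closed_rv_support:
  fixes X :: "'w \<Rightarrow> 'a::metric_space"
  assumes "finite_measure M" (* needed since measure is 0 on sets of infinite measure *)
    and X_meas: "X \<in> borel_measurable M"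
  shows "closed (rv_support M X)"
  unfolding closed_def open_contains_ball
proof (intro ballI)
  fix z assume "z \<in> - rv_support M X"
  then obtain e where "e > 0" and null: "\<not> measure M {w \<in> space M. X w \<in> ball z e} > 0"
    unfolding rv_support_def by blast
  have "z' \<notin> rv_support M X" if "z' \<in> ball z e" for z'
  proof -
    obtain r where "r > 0" "ball z' r \<subseteq> ball z e"
      using openE[OF open_ball \<open>z' \<in> ball z e\<close>] .
    have "X -` ball z e \<inter> space M \<in> sets M"
      using X_meas by (rule measurable_sets) simp
    moreover have "X -` ball z e \<inter> space M = {w \<in> space M. X w \<in> ball z e}"
      by blast
    ultimately have "measure M {w \<in> space M. X w \<in> ball z' r} \<le> measure M {w \<in> space M. X w \<in> ball z e}"
      using \<open>ball z' r \<subseteq> ball z e\<close> by (intro finite_measure.finite_measure_mono[OF assms(1)]) auto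
    with null have "\<not> measure M {w \<in> space M. X w \<in> ball z' r} > 0"
      by linarith
    with \<open>r > 0\<close> show ?thesis
      unfolding rv_support_def by blast
  qed
  with \<open>e > 0\<close> show "\<exists>e>0. ball z e \<subseteq> - rv_support M X"
    by blast
qed

theorem theoremB3:
  fixes M :: "'w measure"
    and X :: "'w \<Rightarrow> real ^ 'n"
    and Y0 Y1 :: "'w \<Rightarrow> real"
    and S :: "'n set"
    and Xs X0 X1 :: "(real ^ 'n) set"
    and m0 m1 g0 g1 :: "real ^ 'n \<Rightarrow> real"
    and x xstar :: "real ^ 'n"
    and p :: "real \<Rightarrow> real ^ 'n"
  assumes prob: "prob_space M"
    and X_meas: "X \<in> borel_measurable M"
    and Y0_int: "integrable M Y0" and Y1_int: "integrable M Y1"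
    and supp: "Xs = rv_support M X"
    and part: "Xs = X0 \<union> X1" "X0 \<inter> X1 = {}"
    and cef0: "is_cef M X Y0 m0" and cef1: "is_cef M X Y1 m1"
    and cont0: "continuous_on Xs m0" and cont1: "continuous_on Xs m1"
    and comono: "\<forall>x1\<in>Xs. \<exists>N. open N \<and> x1 \<in> N \<and>
                   (\<forall>x2\<in>N \<inter> Xs. (\<forall>i\<in>S. x2 $ i = x1 $ i) \<longrightarrow>
                      (m1 x1 \<ge> m1 x2 \<longleftrightarrow> m0 x1 \<ge> m0 x2))"
    and F_def: "F = closure (interior X1) \<inter> closure (interior X0)"
    and g0: "\<forall>z\<in>X0. g0 z = obs_cef X1 m0 m1 z"
            "\<forall>z\<in>F. continuous (at z within (X0 \<union> F)) g0"
    and g1: "\<forall>z\<in>X1. g1 z = obs_cef X1 m0 m1 z"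
            "\<forall>z\<in>F. continuous (at z within (X1 \<union> F)) g1"
    and x_path: "(x \<in> X0 \<and> p ` {0..1} \<subseteq> X0 \<union> F) \<or> (x \<in> X1 \<and> p ` {0..1} \<subseteq> X1 \<union> F)"
    and p_cont: "continuous_on {0..1} p"
    and p0: "p 0 = x" and p1: "p 1 = xstar" and xstar_F: "xstar \<in> F"
    and p_fix: "\<forall>t\<in>{0..1}. \<forall>i\<in>S. p t $ i = x $ i"
    and p_level: "\<forall>t\<in>{0<..<1}. obs_cef X1 m0 m1 (p t) = obs_cef X1 m0 m1 x"
  shows "m1 x = g1 xstar \<and> m0 x = g0 xstar"
proof -
  have "closed Xs"
    using closed_rv_support[OF prob_space.finite_measure[OF prob] X_meas] supp by simp
  then have "F \<subseteq> Xs"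
    using part(1) closure_mono[OF interior_subset, of X1] closure_minimal[of X1 Xs]
    unfolding F_def by blast
  then have path_in: "p ` {0..1} \<subseteq> Xs" and "xstar \<in> Xs"
    using x_path part(1) xstar_F by auto
  have "m0 (p 1) = m0 (p 0) \<and> m1 (p 1) = m1 (p 0)"
  proof (rule comonotone_level_imp_const[where c = "obs_cef X1 m0 m1 x"])
    show "continuous_on {0..1} (\<lambda>t. m0 (p t))" "continuous_on {0..1} (\<lambda>t. m1 (p t))"
      using continuous_on_compose2[OF cont0 p_cont path_in] continuous_on_compose2[OF cont1 p_cont path_in]
      by auto
    show "eventually (\<lambda>s. (m0 (p s) \<le> m0 (p t)) = (m1 (p s) \<le> m1 (p t))) (at t within {0..1})"
      if "t \<in> {0..1}" for t
      using comonotone_along_path[OF comono p_cont path_in p_fix that] by (simp add: eq_commute)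
    show "m0 (p t) = obs_cef X1 m0 m1 x \<or> m1 (p t) = obs_cef X1 m0 m1 x" if "t \<in> {0<..<1}" for t
      using p_level that unfolding obs_cef_def by metis
    show "obs_cef X1 m0 m1 x = m0 (p 0) \<or> obs_cef X1 m0 m1 x = m1 (p 0)"
      using p0 by (simp add: obs_cef_def)
  qed simp
  moreover have "g0 xstar = m0 xstar" "g1 xstar = m1 xstar"
  proof -
    have m_cont: "continuous (at xstar within Xs) m0" "continuous (at xstar within Xs) m1"
      using cont0 cont1 \<open>xstar \<in> Xs\<close> by (simp_all add: continuous_on_eq_continuous_within)
    have agree0: "g0 y = m0 y" if "y \<in> X0" for y
      using g0(1) part(2) that by (auto simp: obs_cef_def)
    have agree1: "g1 y = m1 y" if "y \<in> X1" for y
      using g1(1) that by (simp add: obs_cef_def)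
    show "g0 xstar = m0 xstar"
      by (rule continuous_within_closure_eq[of xstar "interior X0" "X0 \<union> F" g0 Xs m0])
        (use xstar_F g0(2) m_cont agree0 part(1) interior_subset[of X0] in \<open>auto simp: F_def\<close>)
    show "g1 xstar = m1 xstar"
      by (rule continuous_within_closure_eq[of xstar "interior X1" "X1 \<union> F" g1 Xs m1])
        (use xstar_F g1(2) m_cont agree1 part(1) interior_subset[of X1] in \<open>auto simp: F_def\<close>)
  qed
  ultimately show ?thesis
    using p0 p1 by simp
qed

end
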